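(* Let $\alpha \in (0, \tfrac{1}{2}\pi)$ and put $\kappa = \sin \alpha$. Then $$\tfrac{1}{2} \pi \,_2F_1 (\tfrac{1}{3}, \tfrac{2}{3}; 1; \kappa^2) = \sqrt2 \int_0^{\alpha} \frac{\cos \frac{1}{3} \psi}{\sqrt{\cos 2 \psi - \cos 2 \alpha}}\, {\rm d} \psi.$$
   Context: $\,_2F_1$ denotes the Gauss hypergeometric function. *)

theory Defs
  imports "HOL-Analysis.Analysis"
begin

text \<open>Gauss hypergeometric function, defined by its power series
  (convergent for |z| < 1, which is the only range used).\<close>
definition hyp2F1 :: "real \<Rightarrow> real \<Rightarrow> real \<Rightarrow> real \<Rightarrow> real" where
  "hyp2F1 a b c z =
     (\<Sum>n. pochhammer a n * pochhammer b n / (pochhammer c n * fact n) * z ^ n)"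

end

theory Submission
  imports Defs "HOL-Real_Asymp.Real_Asymp"
begin

(* Write T(z) = 2F1(1/3, 2/3; 1/2; z). The hypergeometric differential equation turns
   U(x) = T(sin x ^ 2) * cos x into a solution of U'' = -U/9 with U(0) = 1 and U'(0) = 0,
   hence T(sin x ^ 2) * cos x = cos (x/3) on (-pi/2, pi/2).
   Integrating T(k^2 sin t ^ 2) termwise over [0, pi/2], Wallis' integrals of sin t ^ (2n) raise
   the lower parameter 1/2 to 1, which gives (pi/2) * 2F1(1/3, 2/3; 1; k^2).  The substitution
   sin psi = k sin t with k = sin alpha turns the same integral into the integral over [0, alpha]
   of T(sin psi ^ 2) * cos psi / sqrt (k^2 - sin psi ^ 2) = cos (psi/3) / sqrt (k^2 - sin psi ^ 2),
   and cos (2 psi) - cos (2 alpha) = 2 (k^2 - sin psi ^ 2). *)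

lemma fps_hypergeo_2_1_nth:
  "fps_nth (fps_hypergeo [a, b] [c] (1::real)) n =
     pochhammer a n * pochhammer b n / (pochhammer c n * fact n)"
  by simp

lemma hyp2F1_eq_eval_fps: "hyp2F1 a b c z = eval_fps (fps_hypergeo [a, b] [c] 1) z"
  by (simp add: hyp2F1_def eval_fps_def)

lemma half_notin_nonpos_Ints: "(1/2 :: real) \<notin> \<int>\<^sub>\<le>\<^sub>0"
  by (auto elim!: nonpos_Ints_cases)

lemma fps_hypergeo_2_1_Suc:
  assumes "c \<notin> \<int>\<^sub>\<le>\<^sub>0"
  shows "(of_nat n + 1) * (c + of_nat n) * fps_nth (fps_hypergeo [a, b] [c] (1::real)) (Suc n) =
    (a + of_nat n) * (b + of_nat n) * fps_nth (fps_hypergeo [a, b] [c] 1) n"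
proof -
  have "c \<noteq> - of_nat n"
    using assms by auto
  then have "(of_nat n + 1) * (c + of_nat n) \<noteq> 0"
    by (simp add: add_eq_0_iff)
  then show ?thesis
    using fps_hypergeo_rec[of "[a, b]" "[c]" 1 n] by (simp del: fps_hypergeo_nth add: field_simps)
qed

lemma fps_conv_radius_hypergeo_2_1:
  assumes "c \<notin> \<int>\<^sub>\<le>\<^sub>0"
  shows "1 \<le> fps_conv_radius (fps_hypergeo [a, b] [c] (1::real))"
proof (cases "a \<in> \<int>\<^sub>\<le>\<^sub>0 \<or> b \<in> \<int>\<^sub>\<le>\<^sub>0")
  case True
  then obtain k :: nat where "a = - of_nat k \<or> b = - of_nat k"
    by (auto elim!: nonpos_Ints_cases')
  then have numerator_zero: "pochhammer a n * pochhammer b n = 0" if "n > k" for n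
    using that by (auto simp: pochhammer_eq_0_iff)
  have coeff_zero: "fps_nth (fps_hypergeo [a, b] [c] 1) n = 0" if "n > k" for n
    unfolding fps_hypergeo_2_1_nth numerator_zero[OF that] by simp
  have "eventually (\<lambda>n. fps_nth (fps_hypergeo [a, b] [c] 1) n = 0) sequentially"
    using eventually_gt_at_top[of k] by (rule eventually_mono) (rule coeff_zero)
  from conv_radius_cong'[OF this] have "fps_conv_radius (fps_hypergeo [a, b] [c] 1) = \<infinity>"
    by (simp add: fps_conv_radius_def del: fps_hypergeo_nth)
  then show ?thesis by simp
next
  case False
  let ?f = "fps_nth (fps_hypergeo [a, b] [c] (1::real))"
  have nz: "?f n \<noteq> 0" for n
    using False assms by (auto simp: pochhammer_eq_0_iff)
  have ratio: "norm (?f n) / norm (?f (Suc n)) =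
      \<bar>(of_nat n + 1) * (c + of_nat n)\<bar> / \<bar>(a + of_nat n) * (b + of_nat n)\<bar>" for n
  proof -
    have "\<bar>(of_nat n + 1) * (c + of_nat n)\<bar> * norm (?f (Suc n)) =
        \<bar>(a + of_nat n) * (b + of_nat n)\<bar> * norm (?f n)"
      using fps_hypergeo_2_1_Suc[OF assms, of n a b] by (metis abs_mult real_norm_def)
    moreover have "(a + of_nat n) * (b + of_nat n) \<noteq> 0"
      using False by (auto simp flip: eq_neg_iff_add_eq_0)
    ultimately show ?thesis
      using nz[of "Suc n"] by (simp add: divide_simps ac_simps del: fps_hypergeo_nth)
  qed
  have "(\<lambda>n. \<bar>(of_nat n + 1) * (c + of_nat n)\<bar> / \<bar>(a + of_nat n) * (b + of_nat n)\<bar>) \<longlonglongrightarrow> 1"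
    by real_asymp
  then have "(\<lambda>n. norm (?f n) / norm (?f (Suc n))) \<longlonglongrightarrow> 1"
    by (simp only: ratio)
  then have "conv_radius ?f = 1"
    by (rule conv_radius_ratio_limit_nonzero[rotated 2]) simp_all
  then show ?thesis by (simp add: fps_conv_radius_def)
qed

lemma ereal_norm_less_fps_conv_radius:
  fixes f :: "real fps"
  assumes "1 \<le> fps_conv_radius f" and "norm z < 1"
  shows "ereal (norm z) < fps_conv_radius f"
  using assms by (metis ereal_less(3) order_less_le_trans)

lemma hyp2F1_sums:
  assumes "c \<notin> \<int>\<^sub>\<le>\<^sub>0" and "\<bar>z\<bar> < 1"
  shows "(\<lambda>n. fps_nth (fps_hypergeo [a, b] [c] 1) n * z ^ n) sums hyp2F1 a b c z"
  unfolding hyp2F1_eq_eval_fps using assms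
  by (intro sums_eval_fps ereal_norm_less_fps_conv_radius fps_conv_radius_hypergeo_2_1) simp_all

lemma isCont_hyp2F1:
  fixes a b c z :: real
  assumes "c \<notin> \<int>\<^sub>\<le>\<^sub>0" and "\<bar>z\<bar> < 1"
  shows "isCont (hyp2F1 a b c) z"
  unfolding hyp2F1_eq_eval_fps[abs_def] using assms
  by (intro continuous_eval_fps ereal_norm_less_fps_conv_radius fps_conv_radius_hypergeo_2_1) simp_all

lemma fps_hypergeo_2_1_ode:
  fixes a b c :: real
  defines "F \<equiv> fps_hypergeo [a, b] [c] 1"
  assumes "c \<notin> \<int>\<^sub>\<le>\<^sub>0"
  shows "fps_X * (1 - fps_X) * fps_deriv (fps_deriv F)
      + (fps_const c - fps_const (a + b + 1) * fps_X) * fps_deriv F = fps_const (a * b) * F"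
proof (rule fps_ext)
  fix n
  have "(of_nat n + 1) * (c + of_nat n) * fps_nth F (Suc n) =
      (a + of_nat n) * (b + of_nat n) * fps_nth F n"
    unfolding F_def by (rule fps_hypergeo_2_1_Suc[OF assms(2)])
  then show "fps_nth (fps_X * (1 - fps_X) * fps_deriv (fps_deriv F)
      + (fps_const c - fps_const (a + b + 1) * fps_X) * fps_deriv F) n =
      fps_nth (fps_const (a * b) * F) n"
    by (cases n) (simp_all add: algebra_simps fps_X_mult_nth del: fps_hypergeo_nth)
qed

lemma eval_fps_hypergeo_2_1_ode:
  fixes a b c z :: real
  defines "F \<equiv> fps_hypergeo [a, b] [c] 1"
  assumes "c \<notin> \<int>\<^sub>\<le>\<^sub>0" and "\<bar>z\<bar> < 1"
  shows "z * (1 - z) * eval_fps (fps_deriv (fps_deriv F)) z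
      + (c - (a + b + 1) * z) * eval_fps (fps_deriv F) z = a * b * eval_fps F z"
proof -
  have inside: "ereal \<bar>z\<bar> < fps_conv_radius G" if "1 \<le> fps_conv_radius G" for G :: "real fps"
    using ereal_norm_less_fps_conv_radius[OF that, of z] assms(3) by simp
  have mult: "1 \<le> fps_conv_radius (G * H)"
    if "1 \<le> fps_conv_radius G" "1 \<le> fps_conv_radius H" for G H :: "real fps"
    using that fps_conv_radius_mult[of G H] by (simp add: min_def split: if_splits)
  have diff: "1 \<le> fps_conv_radius (G - H)"
    if "1 \<le> fps_conv_radius G" "1 \<le> fps_conv_radius H" for G H :: "real fps"
    using that fps_conv_radius_diff[of G H] by (simp add: min_def split: if_splits)
  have F: "1 \<le> fps_conv_radius F"
    unfolding F_def by (rule fps_conv_radius_hypergeo_2_1[OF assms(2)])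
  then have F': "1 \<le> fps_conv_radius (fps_deriv F)"
    and F'': "1 \<le> fps_conv_radius (fps_deriv (fps_deriv F))"
    using fps_conv_radius_deriv[of F] fps_conv_radius_deriv[of "fps_deriv F"] by order+
  have "eval_fps (fps_X * (1 - fps_X) * fps_deriv (fps_deriv F)
      + (fps_const c - fps_const (a + b + 1) * fps_X) * fps_deriv F) z =
      eval_fps (fps_const (a * b) * F) z"
    unfolding F_def fps_hypergeo_2_1_ode[OF assms(2)] ..
  then show ?thesis
    using assms(3)
    by (simp add: eval_fps_add eval_fps_diff eval_fps_mult inside mult diff F F' F''
        del: fps_const_mult_left)
qed

lemma harmonic_oscillator_zero:
  fixes W W' :: "real \<Rightarrow> real"
  assumes W: "\<And>x. x \<in> {a<..<b} \<Longrightarrow> (W has_real_derivative W' x) (at x)"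
    and W': "\<And>x. x \<in> {a<..<b} \<Longrightarrow> (W' has_real_derivative - (\<omega>\<^sup>2 * W x)) (at x)"
    and x\<^sub>0: "x\<^sub>0 \<in> {a<..<b}" "W x\<^sub>0 = 0" "W' x\<^sub>0 = 0"
    and x: "x \<in> {a<..<b}"
  shows "W x = 0"
proof -
  have "a < b" using x\<^sub>0 by simp
  define E where "E y = (W' y)\<^sup>2 + \<omega>\<^sup>2 * (W y)\<^sup>2" for y
  have "(E has_real_derivative 0) (at y)" if "y \<in> {a<..<b}" for y
    unfolding E_def by (auto intro!: derivative_eq_intros W W' that simp: algebra_simps)
  then have "E y = E x\<^sub>0" if "y \<in> {a<..<b}" for y
    using DERIV_isconst3[OF \<open>a < b\<close> that x\<^sub>0(1)] by blast
  moreover have "E x\<^sub>0 = 0"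
    using x\<^sub>0 by (simp add: E_def)
  moreover have "(W' y)\<^sup>2 \<le> E y" for y
    by (simp add: E_def)
  ultimately have "(W' y)\<^sup>2 \<le> 0" if "y \<in> {a<..<b}" for y
    using that by metis
  then have "(W has_real_derivative 0) (at y)" if "y \<in> {a<..<b}" for y
    using W[OF that] that by simp
  then have "W x = W x\<^sub>0"
    using DERIV_isconst3[OF \<open>a < b\<close> x x\<^sub>0(1)] by blast
  with x\<^sub>0 show ?thesis by simp
qed

lemma sin_squared_less_1:
  assumes "\<bar>x\<bar> < pi / 2"
  shows "sin x ^ 2 < 1"
proof -
  have "cos x > 0"
    using assms by (intro cos_gt_zero_pi) (auto simp: abs_less_iff)
  then show ?thesis by (simp add: sin_squared_eq)
qed

lemma hyp2F1_half_sin_squared_ode: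
  fixes a y :: real
  defines "F \<equiv> fps_hypergeo [a, 1 - a] [1/2] 1"
  defines "U \<equiv> \<lambda>x. eval_fps F (sin x ^ 2) * cos x"
    and "V \<equiv> \<lambda>x. 2 * sin x * cos x ^ 2 * eval_fps (fps_deriv F) (sin x ^ 2) - sin x * eval_fps F (sin x ^ 2)"
  assumes "\<bar>y\<bar> < pi / 2"
  shows "(U has_real_derivative V y) (at y)"
    and "(V has_real_derivative - ((1 - 2 * a)\<^sup>2 * U y)) (at y)"
proof -
  have "1 \<le> fps_conv_radius F"
    unfolding F_def by (rule fps_conv_radius_hypergeo_2_1[OF half_notin_nonpos_Ints])
  then have "1 \<le> fps_conv_radius (fps_deriv F)"
    using fps_conv_radius_deriv[of F] by order
  have z: "\<bar>sin y ^ 2\<bar> < 1"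
    using sin_squared_less_1[OF assms(4)] by simp
  have dF: "(eval_fps F has_real_derivative eval_fps (fps_deriv F) u) (at u)" if "\<bar>u\<bar> < 1" for u
    using that \<open>1 \<le> fps_conv_radius F\<close>
    by (intro has_field_derivative_eval_fps ereal_norm_less_fps_conv_radius) simp_all
  have dF': "(eval_fps (fps_deriv F) has_real_derivative eval_fps (fps_deriv (fps_deriv F)) u) (at u)"
    if "\<bar>u\<bar> < 1" for u
    using that \<open>1 \<le> fps_conv_radius (fps_deriv F)\<close>
    by (intro has_field_derivative_eval_fps ereal_norm_less_fps_conv_radius) simp_all
  have ode: "sin y ^ 2 * (1 - sin y ^ 2) * eval_fps (fps_deriv (fps_deriv F)) (sin y ^ 2)
      + (1/2 - 2 * sin y ^ 2) * eval_fps (fps_deriv F) (sin y ^ 2) = a * (1 - a) * eval_fps F (sin y ^ 2)"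
    using eval_fps_hypergeo_2_1_ode[OF half_notin_nonpos_Ints z, of a "1 - a"] unfolding F_def by simp
  have cos_sq: "cos y ^ 2 = 1 - sin y ^ 2"
    by (simp add: cos_squared_eq)
  show "(U has_real_derivative V y) (at y)"
    unfolding U_def V_def
    by (rule derivative_eq_intros DERIV_chain2[OF dF] refl | fact)+ (simp add: power2_eq_square algebra_simps)
  show "(V has_real_derivative - ((1 - 2 * a)\<^sup>2 * U y)) (at y)"
    unfolding U_def V_def
    by (rule derivative_eq_intros DERIV_chain2[OF dF] DERIV_chain2[OF dF'] refl | fact)+
      (use ode cos_sq in \<open>simp add: power2_eq_square, algebra\<close>)
qed

lemma hyp2F1_half_sin_squared:
  fixes a x :: real
  assumes "\<bar>x\<bar> < pi / 2"
  shows "hyp2F1 a (1 - a) (1/2) (sin x ^ 2) * cos x = cos ((1 - 2 * a) * x)"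
proof -
  define F where "F = fps_hypergeo [a, 1 - a] [1/2] (1::real)"
  define U where "U = (\<lambda>x. eval_fps F (sin x ^ 2) * cos x)"
  define V where "V = (\<lambda>x. 2 * sin x * cos x ^ 2 * eval_fps (fps_deriv F) (sin x ^ 2)
      - sin x * eval_fps F (sin x ^ 2))"
  define \<omega> where "\<omega> = 1 - 2 * a"
  have dU: "(U has_real_derivative V y) (at y)"
    and dV: "(V has_real_derivative - (\<omega>\<^sup>2 * U y)) (at y)" if "y \<in> {-(pi/2)<..<pi/2}" for y
  proof -
    have "\<bar>y\<bar> < pi / 2"
      using that by auto
    from hyp2F1_half_sin_squared_ode[OF this, of a]
    show "(U has_real_derivative V y) (at y)" "(V has_real_derivative - (\<omega>\<^sup>2 * U y)) (at y)"
      unfolding U_def V_def F_def \<omega>_def by simp_all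
  qed
  have "U y - cos (\<omega> * y) = 0" if "y \<in> {-(pi/2)<..<pi/2}" for y
  proof (rule harmonic_oscillator_zero[where x\<^sub>0 = 0, OF _ _ _ _ _ that])
    show "((\<lambda>y. U y - cos (\<omega> * y)) has_real_derivative V y + \<omega> * sin (\<omega> * y)) (at y)"
      if "y \<in> {-(pi/2)<..<pi/2}" for y
      using that by (auto intro!: derivative_eq_intros dU)
    show "((\<lambda>y. V y + \<omega> * sin (\<omega> * y)) has_real_derivative - (\<omega>\<^sup>2 * (U y - cos (\<omega> * y)))) (at y)"
      if "y \<in> {-(pi/2)<..<pi/2}" for y
      using that by (auto intro!: derivative_eq_intros dV simp: algebra_simps power2_eq_square)
  qed (auto simp: U_def V_def F_def eval_fps_at_0)
  then have "U x = cos (\<omega> * x)"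
    using assms unfolding abs_less_iff by simp
  then show ?thesis
    by (simp add: U_def F_def \<omega>_def hyp2F1_eq_eval_fps)
qed

lemma has_integral_sin_power_add_2:
  assumes "((\<lambda>t. sin t ^ m) has_integral I) {0..pi/2}"
  shows "((\<lambda>t. sin t ^ (m + 2)) has_integral (real m + 1) / (real m + 2) * I) {0..pi/2}"
proof -
  define F where "F t = sin t ^ Suc m * cos t" for t :: real
  define D where "D t = (real m + 1) * sin t ^ m - (real m + 2) * sin t ^ (m + 2)" for t :: real
  have "(F has_real_derivative D t) (at t)" for t
  proof -
    have "(F has_real_derivative (real m + 1) * sin t ^ m * cos t ^ 2 - sin t ^ (m + 2)) (at t)"
      unfolding F_def by (rule derivative_eq_intros refl)+ (simp add: power2_eq_square algebra_simps)
    moreover have "(real m + 1) * sin t ^ m * cos t ^ 2 - sin t ^ (m + 2) = D t"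
      unfolding D_def cos_squared_eq by (simp add: algebra_simps power_add power2_eq_square)
    ultimately show ?thesis by simp
  qed
  then have "(D has_integral F (pi/2) - F 0) {0..pi/2}"
    by (intro fundamental_theorem_of_calculus)
       (auto simp: has_real_derivative_iff_has_vector_derivative[symmetric] intro: has_field_derivative_at_within)
  then have "((\<lambda>t. ((real m + 1) * sin t ^ m - D t) / (real m + 2)) has_integral
      ((real m + 1) * I - 0) / (real m + 2)) {0..pi/2}"
    by (intro has_integral_divide has_integral_diff has_integral_mult_right assms) (simp add: F_def)
  moreover have "((real m + 1) * sin t ^ m - D t) / (real m + 2) = sin t ^ (m + 2)" for t
    by (simp add: D_def field_simps add_pos_pos)
  ultimately show ?thesis by simp
qed

lemma has_integral_sin_power_even:
  "((\<lambda>t. sin t ^ (2 * n)) has_integral pi / 2 * pochhammer (1/2) n / fact n) {0..pi/2}"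
proof (induction n)
  case 0
  show ?case using has_integral_const_real[of "1::real" 0 "pi/2"] by simp
next
  case (Suc n)
  have "(real (2 * n) + 1) / (real (2 * n) + 2) * (pi / 2 * pochhammer (1/2) n / fact n) =
      pi / 2 * pochhammer (1/2) (Suc n) / fact (Suc n)"
    unfolding pochhammer_Suc fact_Suc by (simp add: field_simps)
  then show ?case
    using has_integral_sin_power_add_2[OF Suc.IH] by simp
qed

lemma has_integral_hyp2F1_half_sin_squared:
  fixes a b k :: real
  assumes "\<bar>k\<bar> < 1"
  shows "((\<lambda>t. hyp2F1 a b (1/2) (k * sin t ^ 2)) has_integral pi / 2 * hyp2F1 a b 1 k) {0..pi/2}"
proof -
  define c where "c = fps_nth (fps_hypergeo [a, b] [1/2] (1::real))"
  define d where "d = fps_nth (fps_hypergeo [a, b] [1] (1::real))"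
  have sin_sq: "\<bar>k * sin t ^ 2\<bar> \<le> \<bar>k\<bar>" for t
    by (simp add: abs_mult abs_square_le_1 mult_left_le)
  have term_integral: "((\<lambda>t. c n * (k * sin t ^ 2) ^ n) has_integral pi / 2 * (d n * k ^ n)) {0..pi/2}" for n
  proof -
    have "pochhammer (1/2::real) n \<noteq> 0"
      by (simp add: pochhammer_eq_0_iff)
    then have integral_value: "c n * k ^ n * (pi / 2 * pochhammer (1/2) n / fact n) = pi / 2 * (d n * k ^ n)"
      by (simp add: c_def d_def pochhammer_fact[symmetric] field_simps)
    have integrand: "(\<lambda>t. c n * (k * sin t ^ 2) ^ n) = (\<lambda>t. c n * k ^ n * sin t ^ (2 * n))"
      by (simp add: power_mult_distrib power_mult mult.assoc)
    show ?thesis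
      unfolding integrand integral_value[symmetric]
      by (rule has_integral_mult_right[OF has_integral_sin_power_even])
  qed
  define M where "M = (\<Sum>n. \<bar>c n\<bar> * \<bar>k\<bar> ^ n)"
  have "summable (\<lambda>n. \<bar>c n\<bar> * \<bar>k\<bar> ^ n)"
    using norm_summable_fps[OF ereal_norm_less_fps_conv_radius[OF fps_conv_radius_hypergeo_2_1[OF half_notin_nonpos_Ints]],
        of "\<bar>k\<bar>" a b] assms
    unfolding c_def by (simp add: abs_mult power_abs del: fps_hypergeo_nth)
  show ?thesis
  proof (rule has_integral_dominated_convergence)
    show "((\<lambda>t. \<Sum>n<m. c n * (k * sin t ^ 2) ^ n) has_integral (\<Sum>n<m. pi / 2 * (d n * k ^ n))) {0..pi/2}" for m
      by (intro has_integral_sum term_integral) auto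
    show "(\<lambda>t. M) integrable_on {0..pi/2}"
      by (rule integrable_const_ivl)
    show "\<forall>t\<in>{0..pi/2}. norm (\<Sum>n<m. c n * (k * sin t ^ 2) ^ n) \<le> M" for m
    proof
      fix t
      have "norm (c n * (k * sin t ^ 2) ^ n) \<le> \<bar>c n\<bar> * \<bar>k\<bar> ^ n" for n
        unfolding real_norm_def abs_mult power_abs
        by (intro mult_left_mono power_mono) (use sin_sq[of t] in \<open>auto simp: abs_mult\<close>)
      then have "norm (\<Sum>n<m. c n * (k * sin t ^ 2) ^ n) \<le> (\<Sum>n<m. \<bar>c n\<bar> * \<bar>k\<bar> ^ n)"
        by (intro order_trans[OF norm_sum sum_mono])
      also have "\<dots> \<le> M"
        unfolding M_def by (intro sum_le_suminf \<open>summable _\<close>) auto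
      finally show "norm (\<Sum>n<m. c n * (k * sin t ^ 2) ^ n) \<le> M" .
    qed
    show "\<forall>t\<in>{0..pi/2}. (\<lambda>m. \<Sum>n<m. c n * (k * sin t ^ 2) ^ n) \<longlonglongrightarrow> hyp2F1 a b (1/2) (k * sin t ^ 2)"
      using hyp2F1_sums[OF half_notin_nonpos_Ints] sin_sq assms
      unfolding c_def sums_def by (meson order_le_less_trans)
    show "(\<lambda>m. \<Sum>n<m. pi / 2 * (d n * k ^ n)) \<longlonglongrightarrow> pi / 2 * hyp2F1 a b 1 k"
      using sums_mult[OF hyp2F1_sums[OF one_notin_nonpos_Ints assms, of a b], of "pi / 2"]
      unfolding d_def sums_def by simp
  qed
qed

lemma has_real_derivative_arcsin_sin_divide:
  fixes \<kappa> \<psi> :: real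
  assumes "\<bar>sin \<psi>\<bar> < \<kappa>"
  shows "((\<lambda>\<psi>. arcsin (sin \<psi> / \<kappa>)) has_real_derivative cos \<psi> / sqrt (\<kappa>\<^sup>2 - sin \<psi> ^ 2)) (at \<psi>)"
proof -
  have "\<kappa> > 0" using assms by linarith
  have "- 1 < sin \<psi> / \<kappa>" "sin \<psi> / \<kappa> < 1"
    using assms \<open>\<kappa> > 0\<close> by (auto simp: field_simps abs_less_iff)
  then have "((\<lambda>\<psi>. arcsin (sin \<psi> / \<kappa>)) has_real_derivative
      inverse (sqrt (1 - (sin \<psi> / \<kappa>)\<^sup>2)) * (cos \<psi> / \<kappa>)) (at \<psi>)"
    using DERIV_chain2[OF DERIV_arcsin DERIV_cdivide[OF DERIV_sin]] by blast
  moreover have "inverse (sqrt (1 - (sin \<psi> / \<kappa>)\<^sup>2)) * (cos \<psi> / \<kappa>) =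
      cos \<psi> / (\<kappa> * sqrt (1 - (sin \<psi> / \<kappa>)\<^sup>2))"
    by (simp add: divide_inverse inverse_mult_distrib ac_simps del: real_sqrt_inverse)
  moreover have "\<kappa> * sqrt (1 - (sin \<psi> / \<kappa>)\<^sup>2) = sqrt (\<kappa>\<^sup>2 - sin \<psi> ^ 2)"
  proof -
    have "\<kappa>\<^sup>2 * (1 - (sin \<psi> / \<kappa>)\<^sup>2) = \<kappa>\<^sup>2 - sin \<psi> ^ 2"
      using \<open>\<kappa> > 0\<close> by (simp add: field_simps)
    then show ?thesis
      using \<open>\<kappa> > 0\<close> by (metis real_sqrt_mult real_sqrt_abs abs_of_pos)
  qed
  ultimately show ?thesis
    by (simp only:)
qed

lemma has_integral_arcsin_substitution:
  fixes h :: "real \<Rightarrow> real" and \<alpha> :: real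
  assumes "0 < \<alpha>" "\<alpha> < pi / 2" and cont: "continuous_on {0..sin \<alpha>} h"
  shows "((\<lambda>\<psi>. h (sin \<psi>) * cos \<psi> / sqrt (sin \<alpha> ^ 2 - sin \<psi> ^ 2)) has_integral
      integral {0..pi/2} (\<lambda>\<theta>. h (sin \<alpha> * sin \<theta>))) {0..\<alpha>}"
proof -
  define \<kappa> where "\<kappa> = sin \<alpha>"
  have "\<kappa> > 0"
    unfolding \<kappa>_def using assms by (intro sin_gt_zero) auto
  define \<theta> where "\<theta> \<psi> = arcsin (sin \<psi> / \<kappa>)" for \<psi>
  have sin_bounds: "0 \<le> sin \<psi> / \<kappa> \<and> sin \<psi> / \<kappa> \<le> 1" if "\<psi> \<in> {0..\<alpha>}" for \<psi>
    using that assms \<open>\<kappa> > 0\<close>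
    by (auto simp: \<kappa>_def intro!: divide_nonneg_pos sin_ge_zero sin_monotone_2pi_le)
  have \<theta>_ends: "\<theta> 0 = 0" "\<theta> \<alpha> = pi / 2"
    using \<open>\<kappa> > 0\<close> by (simp_all add: \<theta>_def \<kappa>_def)
  (* the derivative of \<theta> blows up at \<alpha>, so the substitution rule is used with the endpoints as
     exceptional points; it needs only continuity of \<theta> there *)
  have "((\<lambda>\<psi>. (cos \<psi> / sqrt (\<kappa>\<^sup>2 - sin \<psi> ^ 2)) *\<^sub>R h (\<kappa> * sin (\<theta> \<psi>))) has_integral
      integral {\<theta> 0..\<theta> \<alpha>} (\<lambda>\<theta>. h (\<kappa> * sin \<theta>))) {0..\<alpha>}"
  proof (rule has_integral_substitution_strong[of "{0, \<alpha>}" 0 \<alpha> \<theta> 0 "pi / 2"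
        "\<lambda>\<theta>. h (\<kappa> * sin \<theta>)" "\<lambda>\<psi>. cos \<psi> / sqrt (\<kappa>\<^sup>2 - sin \<psi> ^ 2)"])
    show "\<theta> ` {0..\<alpha>} \<subseteq> {0..pi/2}"
      using sin_bounds arcsin_le_arcsin[of 0] arcsin_ubound by (force simp: \<theta>_def)
    show "continuous_on {0..pi/2} (\<lambda>\<theta>. h (\<kappa> * sin \<theta>))"
      using \<open>\<kappa> > 0\<close> by (intro continuous_on_compose2[OF cont] continuous_intros)
        (auto simp: \<kappa>_def sin_ge_zero mult_left_le)
    show "continuous_on {0..\<alpha>} \<theta>"
      unfolding \<theta>_def using sin_bounds \<open>\<kappa> > 0\<close> by (intro continuous_intros) force+
    show "(\<theta> has_real_derivative cos \<psi> / sqrt (\<kappa>\<^sup>2 - sin \<psi> ^ 2)) (at \<psi> within {0..\<alpha>})"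
      if "\<psi> \<in> {0..\<alpha>} - {0, \<alpha>}" for \<psi>
    proof -
      have "0 < sin \<psi>" "sin \<psi> < \<kappa>"
        using that assms by (auto simp: \<kappa>_def intro!: sin_gt_zero sin_monotone_2pi)
      then show ?thesis
        unfolding \<theta>_def
        by (intro has_field_derivative_at_within[OF has_real_derivative_arcsin_sin_divide]) simp
    qed
  qed (use assms \<theta>_ends in auto)
  then show ?thesis
    unfolding \<kappa>_def[symmetric] \<theta>_ends
  proof (rule has_integral_eq[rotated])
    fix \<psi> assume "\<psi> \<in> {0..\<alpha>}"
    then have "\<kappa> * sin (\<theta> \<psi>) = sin \<psi>"
      using sin_bounds[of \<psi>] \<open>\<kappa> > 0\<close> by (simp add: \<theta>_def)
    then show "(cos \<psi> / sqrt (\<kappa>\<^sup>2 - sin \<psi> ^ 2)) *\<^sub>R h (\<kappa> * sin (\<theta> \<psi>)) =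
        h (sin \<psi>) * cos \<psi> / sqrt (\<kappa>\<^sup>2 - sin \<psi> ^ 2)"
      by simp
  qed
qed

theorem theorem3:
  fixes \<alpha> \<kappa> :: real
  assumes "0 < \<alpha>" and "\<alpha> < pi / 2"
    and "\<kappa> = sin \<alpha>"
  shows "pi / 2 * hyp2F1 (1/3) (2/3) 1 (\<kappa>^2) =
    sqrt 2 * integral {0..\<alpha>} (\<lambda>\<psi>. cos (\<psi> / 3) / sqrt (cos (2 * \<psi>) - cos (2 * \<alpha>)))"
proof -
  have "\<kappa>\<^sup>2 < 1"
    using assms sin_squared_less_1[of \<alpha>] by simp
  define h where "h u = hyp2F1 (1/3) (2/3) (1/2) (u\<^sup>2)" for u :: real
  have "continuous_on {0..\<kappa>} h"
  proof (intro continuous_at_imp_continuous_on ballI)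
    fix u assume "u \<in> {0..\<kappa>}"
    then have "u\<^sup>2 \<le> \<kappa>\<^sup>2"
      by (intro power_mono) auto
    then show "isCont h u"
      unfolding h_def using \<open>\<kappa>\<^sup>2 < 1\<close>
      by (intro continuous_intros isCont_o2[OF _ isCont_hyp2F1] half_notin_nonpos_Ints) simp_all
  qed
  then have substitution: "((\<lambda>\<psi>. h (sin \<psi>) * cos \<psi> / sqrt (\<kappa>\<^sup>2 - sin \<psi> ^ 2)) has_integral
      integral {0..pi/2} (\<lambda>\<theta>. h (\<kappa> * sin \<theta>))) {0..\<alpha>}"
    using has_integral_arcsin_substitution[OF assms(1,2)] assms(3) by simp
  have termwise: "integral {0..pi/2} (\<lambda>\<theta>. h (\<kappa> * sin \<theta>)) = pi / 2 * hyp2F1 (1/3) (2/3) 1 (\<kappa>\<^sup>2)"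
    unfolding h_def power_mult_distrib using \<open>\<kappa>\<^sup>2 < 1\<close>
    by (intro integral_unique has_integral_hyp2F1_half_sin_squared) simp
  (* at \<psi> = \<alpha> both sides are 0, since x / sqrt 0 = 0 *)
  have integrand: "h (sin \<psi>) * cos \<psi> / sqrt (\<kappa>\<^sup>2 - sin \<psi> ^ 2) =
      sqrt 2 * (cos (\<psi> / 3) / sqrt (cos (2 * \<psi>) - cos (2 * \<alpha>)))" if "\<psi> \<in> {0..\<alpha>}" for \<psi>
  proof -
    have "h (sin \<psi>) * cos \<psi> = cos (\<psi> / 3)"
      using hyp2F1_half_sin_squared[of \<psi> "1/3"] that assms by (simp add: h_def)
    moreover have "cos (2 * \<psi>) - cos (2 * \<alpha>) = 2 * (\<kappa>\<^sup>2 - sin \<psi> ^ 2)"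
      by (simp add: cos_double_sin assms(3))
    then have "sqrt (cos (2 * \<psi>) - cos (2 * \<alpha>)) = sqrt 2 * sqrt (\<kappa>\<^sup>2 - sin \<psi> ^ 2)"
      by (simp only: real_sqrt_mult)
    ultimately show ?thesis
      by simp
  qed
  have "((\<lambda>\<psi>. sqrt 2 * (cos (\<psi> / 3) / sqrt (cos (2 * \<psi>) - cos (2 * \<alpha>)))) has_integral
      pi / 2 * hyp2F1 (1/3) (2/3) 1 (\<kappa>\<^sup>2)) {0..\<alpha>}"
    using has_integral_eq[OF integrand substitution[unfolded termwise]] .
  then show ?thesis
    by (subst (asm) has_integral_mult_right_iff) (auto simp: integral_unique)
qed

end
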